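(* Let $P$ be a finite point set in $\mathbb{R}^d$, let $s>0$, and let $A,B\subseteq P$ be such that $\{A,B\}$ is an $s$-well-separated pair with $|B|\geq 2$. (1) For any point $a\in A$ and any two distinct points $b,c\in B$, $|\Delta_{abc}|\leq (1+2/s)\,|\Delta^*(a,b)|$. (2) Assume additionally $|A|\geq 2$. For any two points $a,a'\in A$ and any two points $b,b'\in B$, $|\Delta^*(a,b)|\leq (1+8/s)\,|\Delta^*(a',b')|$.
   Context: Distances are Euclidean. Two point sets $A$ and $B$ form an $s$-well-separated pair if $A$ and $B$ can each be covered by a ball of the same radius $\rho$ such that the distance between the two balls is at least $s\cdot\rho$. $|\Delta_{abc}|=|ab|+|bc|+|ca|$ is the perimeter of the triangle on $a,b,c$. For distinct $p,q\in P$, $\Delta^*(p,q)$ is the minimum-perimeter triangle $\Delta_{pqx}$ over $x\in P\setminus\{p,q\}$. *)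

theory Defs
  imports "HOL-Analysis.Analysis"
begin

definition perim :: "'a::euclidean_space \<Rightarrow> 'a \<Rightarrow> 'a \<Rightarrow> real" where
  "perim a b c = dist a b + dist b c + dist c a"

definition tri_star :: "'a::euclidean_space set \<Rightarrow> 'a \<Rightarrow> 'a \<Rightarrow> real" where
  "tri_star P p q = Min ((\<lambda>x. perim p q x) ` (P - {p, q}))"

definition well_separated :: "real \<Rightarrow> 'a::euclidean_space set \<Rightarrow> 'a set \<Rightarrow> bool" where
  "well_separated s A B \<longleftrightarrow>
     (\<exists>\<rho> c1 c2. \<rho> \<ge> 0 \<and> A \<subseteq> cball c1 \<rho> \<and> B \<subseteq> cball c2 \<rho> \<and>
        setdist (cball c1 \<rho>) (cball c2 \<rho>) \<ge> s * \<rho>)"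

end

theory Submission
  imports Defs
begin

text \<open>Let \<open>\<rho>\<close> be the common radius of the two balls. Any two points on the same side are
  at distance at most \<open>2\<rho>\<close>, while a point of \<open>A\<close> and a point of \<open>B\<close> are at distance
  \<open>d \<ge> s\<rho>\<close>. A minimum-perimeter triangle on \<open>a, b\<close> has perimeter at least \<open>2|ab|\<close>, and for
  \<open>c \<in> B\<close> the triangle \<open>abc\<close> has perimeter at most \<open>2|ab| + 2|bc| \<le> 2|ab| + 4\<rho>\<close>; since
  \<open>\<rho> \<le> |ab|/s\<close>, this gives (1). Moving \<open>a, b\<close> to \<open>a', b'\<close> changes \<open>|ab|\<close> by at most \<open>4\<rho>\<close>,
  which gives (2) in the same way. That \<open>|B| \<ge> 2\<close> forces \<open>\<rho> > 0\<close>, so \<open>A\<close> and \<open>B\<close> are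
  disjoint and the third vertex \<open>c\<close> is admissible.\<close>

lemma perim_ge_twice_dist: "2 * dist p q \<le> perim p q x"
  using dist_triangle[of p q x] by (simp add: perim_def dist_commute)

lemma perim_le_twice_sides: "perim a b c \<le> 2 * dist a b + 2 * dist b c"
  using dist_triangle[of c a b] by (simp add: perim_def dist_commute)

lemma tri_star_le_perim:
  assumes "finite P" "x \<in> P - {p, q}"
  shows "tri_star P p q \<le> perim p q x"
  unfolding tri_star_def using assms by (intro Min_le) auto

lemma tri_star_ge_twice_dist:
  assumes "finite P" "x \<in> P - {p, q}"
  shows "2 * dist p q \<le> tri_star P p q"
  unfolding tri_star_def using assms perim_ge_twice_dist by (subst Min_ge_iff) auto

lemma well_separatedE:
  assumes "well_separated s A B"
  obtains \<rho> where "\<rho> \<ge> 0"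
    and "\<And>x y. x \<in> A \<Longrightarrow> y \<in> B \<Longrightarrow> s * \<rho> \<le> dist x y"
    and "\<And>x y. x \<in> A \<Longrightarrow> y \<in> A \<Longrightarrow> dist x y \<le> 2 * \<rho>"
    and "\<And>x y. x \<in> B \<Longrightarrow> y \<in> B \<Longrightarrow> dist x y \<le> 2 * \<rho>"
proof -
  obtain \<rho> c1 c2 where "\<rho> \<ge> 0" and A: "A \<subseteq> cball c1 \<rho>" and B: "B \<subseteq> cball c2 \<rho>"
    and sep: "s * \<rho> \<le> setdist (cball c1 \<rho>) (cball c2 \<rho>)"
    using assms unfolding well_separated_def by blast
  have diam: "dist x y \<le> 2 * \<rho>" if "x \<in> cball c \<rho>" "y \<in> cball c \<rho>" for c x y
    using that dist_triangle3[of x y c] by simp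
  show thesis
  proof
    show "s * \<rho> \<le> dist x y" if "x \<in> A" "y \<in> B" for x y
    proof -
      have "x \<in> cball c1 \<rho>" "y \<in> cball c2 \<rho>"
        using that A B by auto
      then show ?thesis
        using sep setdist_le_dist order_trans by blast
    qed
  qed (use \<open>\<rho> \<ge> 0\<close> A B diam in blast)+
qed

lemma well_separated_two_pointsE:
  assumes "well_separated s A B" "s > 0" "b \<in> B" "c \<in> B" "b \<noteq> c"
  obtains \<rho> where "\<rho> > 0"
    and "\<And>x y. x \<in> A \<Longrightarrow> y \<in> B \<Longrightarrow> \<rho> \<le> dist x y / s"
    and "\<And>x y. x \<in> A \<Longrightarrow> y \<in> A \<Longrightarrow> dist x y \<le> 2 * \<rho>"
    and "\<And>x y. x \<in> B \<Longrightarrow> y \<in> B \<Longrightarrow> dist x y \<le> 2 * \<rho>"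
    and "A \<inter> B = {}"
proof -
  obtain \<rho> where "\<rho> \<ge> 0" and sep: "\<And>x y. x \<in> A \<Longrightarrow> y \<in> B \<Longrightarrow> s * \<rho> \<le> dist x y"
    and diamA: "\<And>x y. x \<in> A \<Longrightarrow> y \<in> A \<Longrightarrow> dist x y \<le> 2 * \<rho>"
    and diamB: "\<And>x y. x \<in> B \<Longrightarrow> y \<in> B \<Longrightarrow> dist x y \<le> 2 * \<rho>"
    using well_separatedE[OF assms(1)] by blast
  have "\<rho> > 0"
    using diamB[OF assms(3,4)] assms(5) \<open>\<rho> \<ge> 0\<close> by (cases "\<rho> = 0") auto
  show thesis
  proof
    show "\<rho> \<le> dist x y / s" if "x \<in> A" "y \<in> B" for x y
      using sep[OF that] assms(2) by (simp add: pos_le_divide_eq mult.commute)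
    show "A \<inter> B = {}"
    proof (rule ccontr)
      assume "A \<inter> B \<noteq> {}"
      then obtain x where "x \<in> A" "x \<in> B" by blast
      then have "s * \<rho> \<le> 0" using sep[of x x] by simp
      then show False using \<open>\<rho> > 0\<close> assms(2) by (simp add: mult_le_0_iff)
    qed
  qed (use \<open>\<rho> > 0\<close> diamA diamB in auto)
qed

lemma well_separated_perim_le_tri_star:
  assumes "finite P" "s > 0" "B \<subseteq> P" "well_separated s A B"
    and "a \<in> A" "b \<in> B" "c \<in> B" "b \<noteq> c"
  shows "perim a b c \<le> (1 + 2 / s) * tri_star P a b"
proof -
  obtain \<rho> where sep: "\<rho> \<le> dist a b / s" and diamB: "dist b c \<le> 2 * \<rho>"
    and "A \<inter> B = {}"
    using well_separated_two_pointsE[OF assms(4,2,6,7,8)] assms(5-7) by metis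
  then have "c \<in> P - {a, b}"
    using assms(3,5,7,8) by auto
  have "perim a b c \<le> 2 * dist a b + 4 * (dist a b / s)"
    using perim_le_twice_sides[of a b c] diamB sep by linarith
  also have "\<dots> = (1 + 2 / s) * (2 * dist a b)"
    by (simp add: field_simps)
  also have "\<dots> \<le> (1 + 2 / s) * tri_star P a b"
    using tri_star_ge_twice_dist[OF assms(1) \<open>c \<in> P - {a, b}\<close>] assms(2)
    by (intro mult_left_mono) auto
  finally show ?thesis .
qed

lemma exists_other_of_card_ge_2:
  assumes "card B \<ge> 2" "b \<in> B"
  obtains c where "c \<in> B" "c \<noteq> b"
  using assms card_le_Suc0_iff_eq[of B] by (metis card.infinite not_less_eq_eq numeral_2_eq_2 zero_le)

lemma well_separated_tri_star_le_tri_star: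
  assumes "finite P" "s > 0" "B \<subseteq> P" "well_separated s A B" "card B \<ge> 2"
    and "a \<in> A" "a' \<in> A" "b \<in> B" "b' \<in> B"
  shows "tri_star P a b \<le> (1 + 8 / s) * tri_star P a' b'"
proof -
  obtain c where c: "c \<in> B" "c \<noteq> b"
    using exists_other_of_card_ge_2[OF assms(5,8)] .
  obtain c' where c': "c' \<in> B" "c' \<noteq> b'"
    using exists_other_of_card_ge_2[OF assms(5,9)] .
  obtain \<rho> where "\<rho> > 0" and sep: "\<rho> \<le> dist a' b' / s"
    and "dist a a' \<le> 2 * \<rho>" "dist b' b \<le> 2 * \<rho>" "dist b c \<le> 2 * \<rho>"
    and "A \<inter> B = {}"
    using well_separated_two_pointsE[OF assms(4,2) c(1) assms(8) c(2)] assms(6-9) c(1)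
    by metis
  then have "c \<in> P - {a, b}" "c' \<in> P - {a', b'}"
    using assms(3,6-9) c c' by auto
  have "tri_star P a b \<le> perim a b c"
    using assms(1) \<open>c \<in> P - {a, b}\<close> by (rule tri_star_le_perim)
  also have "\<dots> \<le> 2 * dist a b + 4 * \<rho>"
    using perim_le_twice_sides[of a b c] \<open>dist b c \<le> 2 * \<rho>\<close> by linarith
  also have "\<dots> \<le> 2 * (dist a a' + dist a' b' + dist b' b) + 4 * \<rho>"
    using dist_triangle[of a b a'] dist_triangle[of a' b b'] by argo
  also have "\<dots> \<le> 2 * dist a' b' + 16 * \<rho>"
    using \<open>dist a a' \<le> 2 * \<rho>\<close> \<open>dist b' b \<le> 2 * \<rho>\<close> \<open>\<rho> > 0\<close> by argo
  also have "\<dots> \<le> (1 + 8 / s) * (2 * dist a' b')"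
    using sep assms(2) by (simp add: field_simps)
  also have "\<dots> \<le> (1 + 8 / s) * tri_star P a' b'"
    using tri_star_ge_twice_dist[OF assms(1) \<open>c' \<in> P - {a', b'}\<close>] assms(2)
    by (intro mult_left_mono) auto
  finally show ?thesis .
qed

theorem lemma6:
  fixes P A B :: "'a::euclidean_space set" and s :: real
  assumes "finite P" and "s > 0" and "A \<subseteq> P" and "B \<subseteq> P"
    and "well_separated s A B" and "card B \<ge> 2"
  shows "(\<forall>a\<in>A. \<forall>b\<in>B. \<forall>c\<in>B. b \<noteq> c \<longrightarrow>
            perim a b c \<le> (1 + 2 / s) * tri_star P a b)
       \<and> (card A \<ge> 2 \<longrightarrow> (\<forall>a\<in>A. \<forall>a'\<in>A. \<forall>b\<in>B. \<forall>b'\<in>B.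
            tri_star P a b \<le> (1 + 8 / s) * tri_star P a' b'))"
  using well_separated_perim_le_tri_star[OF assms(1,2,4,5)]
    well_separated_tri_star_le_tri_star[OF assms(1,2,4,5,6)]
  by blast

end
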